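(* Let $\mathcal{R}=\{R_1,\ldots,R_n\}$ be a family of axis-aligned rectangles in $\mathbb{R}^2$ such that the $2n$ $x$-coordinates of the vertical sides are pairwise distinct and the $2n$ $y$-coordinates of the horizontal sides are pairwise distinct. Let $a_1,\ldots,a_{2n}$ be its $x$-sequence and $b_1,\ldots,b_{2n}$ its $y$-sequence, and for each $i$ let $a(i)=(j_1,j_2)$ and $b(i)=(j_1',j_2')$. Then there exists a family of axis-aligned squares $\mathcal{S}=\{S_1,\ldots,S_n\}$ whose $x$-sequence equals that of $\mathcal{R}$ and whose $y$-sequence equals that of $\mathcal{R}$ if and only if the following linear program in the variables $x_1,\ldots,x_{2n-1},y_1,\ldots,y_{2n-1}$ is feasible: $$x_k\ge 1,\ y_k\ge 1 \ (k=1,\ldots,2n-1),\qquad \sum_{k=j_1}^{j_2-1}x_k=\sum_{k=j_1'}^{j_2'-1}y_k \ \text{ for every } i=1,\ldots,n, \text{ where } a(i)=(j_1,j_2),\ b(i)=(j_1',j_2').$$ Moreover, from a feasible solution one obtains such squares by setting $l(S_i)=\sum_{k=1}^{j_1-1}x_k$, $r(S_i)=\sum_{k=1}^{j_2-1}x_k$, $b(S_i)=\sum_{k=1}^{j_1'-1}y_k$, $t(S_i)=\sum_{k=1}^{j_2'-1}y_k$.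
   Context: For an axis-aligned rectangle $R$, $l(R),r(R)$ denote the $x$-coordinates of its left and right sides and $b(R),t(R)$ the $y$-coordinates of its bottom and top sides. For a family $\{R_1,\ldots,R_n\}$ of axis-aligned rectangles with pairwise distinct vertical-side $x$-coordinates, list the $2n$ values $l(R_i), r(R_i)$ in increasing order $a'_1<\cdots<a'_{2n}$ and replace each value $l(R_i)$ or $r(R_i)$ by the index $i$; the resulting sequence $a_1,\ldots,a_{2n}$ (in which each $i\in\{1,\ldots,n\}$ appears exactly twice) is the $x$-sequence, and $a(i)=(j_1,j_2)$ denotes the pair of positions $j_1<j_2$ with $a_{j_1}=a_{j_2}=i$. The $y$-sequence $b_1,\ldots,b_{2n}$ and the function $b(i)=(j_1',j_2')$ are defined analogously using the values $b(R_i),t(R_i)$. The same definitions apply to families of squares, which must then also have pairwise distinct such coordinates. *)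

theory Defs
  imports Complex_Main
begin

text \<open>A family of n axis-aligned rectangles is given by four coordinate functions
  l r b t :: nat => real on the index set {1..n}: rectangle i is
  [l i, r i] x [b i, t i].\<close>

definition rect_family :: "nat \<Rightarrow> (nat \<Rightarrow> real) \<Rightarrow> (nat \<Rightarrow> real) \<Rightarrow> (nat \<Rightarrow> real) \<Rightarrow> (nat \<Rightarrow> real) \<Rightarrow> bool" where
  "rect_family n l r b t \<longleftrightarrow> (\<forall>i\<in>{1..n}. l i < r i \<and> b i < t i)"

definition square_family :: "nat \<Rightarrow> (nat \<Rightarrow> real) \<Rightarrow> (nat \<Rightarrow> real) \<Rightarrow> (nat \<Rightarrow> real) \<Rightarrow> (nat \<Rightarrow> real) \<Rightarrow> bool" where
  "square_family n l r b t \<longleftrightarrow> rect_family n l r b t \<and> (\<forall>i\<in>{1..n}. r i - l i = t i - b i)"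

definition distinct_coords :: "nat \<Rightarrow> (nat \<Rightarrow> real) \<Rightarrow> (nat \<Rightarrow> real) \<Rightarrow> bool" where
  "distinct_coords n l r \<longleftrightarrow> inj_on l {1..n} \<and> inj_on r {1..n} \<and> (\<forall>i\<in>{1..n}. \<forall>j\<in>{1..n}. l i \<noteq> r j)"

definition coord_vals :: "nat \<Rightarrow> (nat \<Rightarrow> real) \<Rightarrow> (nat \<Rightarrow> real) \<Rightarrow> real set" where
  "coord_vals n l r = l ` {1..n} \<union> r ` {1..n}"

definition coord_seq :: "nat \<Rightarrow> (nat \<Rightarrow> real) \<Rightarrow> (nat \<Rightarrow> real) \<Rightarrow> nat list" where
  "coord_seq n l r = map (\<lambda>v. THE i. i \<in> {1..n} \<and> (l i = v \<or> r i = v))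
                          (sorted_list_of_set (coord_vals n l r))"

text \<open>Positions (1-based) j1 < j2 at which index i occurs in a sequence s;
  a(i) = (seq_fst s i, seq_snd s i).\<close>
definition seq_occ :: "nat list \<Rightarrow> nat \<Rightarrow> nat set" where
  "seq_occ s i = {j. 1 \<le> j \<and> j \<le> length s \<and> s ! (j - 1) = i}"

definition seq_fst :: "nat list \<Rightarrow> nat \<Rightarrow> nat" where
  "seq_fst s i = Min (seq_occ s i)"

definition seq_snd :: "nat list \<Rightarrow> nat \<Rightarrow> nat" where
  "seq_snd s i = Max (seq_occ s i)"

definition lp_feasible_sol :: "nat \<Rightarrow> nat list \<Rightarrow> nat list \<Rightarrow> (nat \<Rightarrow> real) \<Rightarrow> (nat \<Rightarrow> real) \<Rightarrow> bool" where
  "lp_feasible_sol n as bs x y \<longleftrightarrow>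
     (\<forall>k\<in>{1..2*n-1}. x k \<ge> 1 \<and> y k \<ge> 1) \<and>
     (\<forall>i\<in>{1..n}. (\<Sum>k\<in>{seq_fst as i..<seq_snd as i}. x k) = (\<Sum>k\<in>{seq_fst bs i..<seq_snd bs i}. y k))"

end

theory Submission
  imports Defs
begin

text \<open>The x-sequence records only the relative order of the 2n coordinates, so it is unchanged
  by any strictly increasing relabelling of them. Given a feasible solution, the prefix sums of x
  (and of y) increase strictly with the position; putting the coordinate at position j of a
  sequence at the j-th prefix sum therefore realizes the sequence, and the equations of the linear
  program say exactly that every resulting rectangle is a square. Conversely, for squares the gaps
  between consecutive coordinates are positive, every side length is a telescoping sum of gaps, so
  the gaps satisfy the equations, and scaling them by a large enough constant makes them at
  least 1.\<close>

text \<open>The 1-based position of \<open>v\<close> in the increasing enumeration of \<open>V\<close>, matching the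
  position convention of \<open>seq_occ\<close>.\<close>

definition set_rank :: "'a::linorder set \<Rightarrow> 'a \<Rightarrow> nat" where
  "set_rank V v = Suc (card {w\<in>V. w < v})"

lemma set_rank_less_iff:
  assumes "finite V" "v \<in> V" "w \<in> V"
  shows "set_rank V v < set_rank V w \<longleftrightarrow> v < w"
proof
  assume "v < w"
  then have "{u\<in>V. u < v} \<subset> {u\<in>V. u < w}" using assms(2) by auto
  then show "set_rank V v < set_rank V w"
    unfolding set_rank_def using assms(1) by (simp add: psubset_card_mono)
next
  assume "set_rank V v < set_rank V w"
  moreover have "set_rank V w \<le> set_rank V v" if "w \<le> v"
    unfolding set_rank_def using assms(1) that by (auto intro!: card_mono)
  ultimately show "v < w" by (meson not_le)
qed

lemma set_rank_sorted_list_of_set: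
  assumes "finite V" "j < card V"
  shows "set_rank V (sorted_list_of_set V ! j) = Suc j"
proof -
  let ?L = "sorted_list_of_set V"
  have sorted: "sorted_wrt (<) ?L" and len: "length ?L = card V" and set: "set ?L = V"
    using assms(1) by auto
  have "{w\<in>V. w < ?L ! j} = (!) ?L ` {..<j}"
  proof (intro set_eqI iffI)
    fix w assume "w \<in> {w\<in>V. w < ?L ! j}"
    then have "w \<in> set ?L" "w < ?L ! j" using set by auto
    then obtain i where i: "i < length ?L" "?L ! i = w" "?L ! i < ?L ! j"
      by (auto simp: in_set_conv_nth)
    have "i < j"
    proof (rule ccontr)
      assume "\<not> i < j"
      then have "i = j \<or> j < i" by linarith
      then have "?L ! j \<le> ?L ! i"
        using sorted_wrt_nth_less[OF sorted _ i(1), of j] by auto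
      then show False using i(3) by simp
    qed
    then show "w \<in> (!) ?L ` {..<j}" using i(2) by blast
  next
    fix w assume "w \<in> (!) ?L ` {..<j}"
    then obtain i where "i < j" "w = ?L ! i" by blast
    moreover have "j < length ?L" using assms(2) len by simp
    ultimately show "w \<in> {w\<in>V. w < ?L ! j}"
      using sorted_wrt_nth_less[OF sorted, of i j] nth_mem[of i ?L] set by simp
  qed
  moreover have "inj_on ((!) ?L) {..<j}"
  proof (rule inj_onI)
    fix i k assume "i \<in> {..<j}" "k \<in> {..<j}" "?L ! i = ?L ! k"
    then show "i = k" using assms(2) len by (simp add: nth_eq_iff_index_eq)
  qed
  ultimately show ?thesis unfolding set_rank_def by (simp add: card_image)
qed

lemma nth_sorted_list_of_set_rank:
  assumes "finite V" "v \<in> V"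
  shows "set_rank V v \<in> {1..card V}" "sorted_list_of_set V ! (set_rank V v - 1) = v"
proof -
  obtain j where "j < card V" "v = sorted_list_of_set V ! j"
    using assms by (metis in_set_conv_nth length_sorted_list_of_set set_sorted_list_of_set)
  then show "set_rank V v \<in> {1..card V}" "sorted_list_of_set V ! (set_rank V v - 1) = v"
    using set_rank_sorted_list_of_set[OF assms(1)] by auto
qed

lemma finite_coord_vals [simp]: "finite (coord_vals n l r)"
  unfolding coord_vals_def by simp

lemma card_coord_vals:
  assumes "distinct_coords n l r"
  shows "card (coord_vals n l r) = 2 * n"
proof -
  have "l ` {1..n} \<inter> r ` {1..n} = {}"
    using assms unfolding distinct_coords_def by auto
  then have "card (coord_vals n l r) = card (l ` {1..n}) + card (r ` {1..n})"
    unfolding coord_vals_def by (simp add: card_Un_disjoint)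
  then show ?thesis
    using assms unfolding distinct_coords_def by (simp add: card_image)
qed

definition coord_owner :: "nat \<Rightarrow> (nat \<Rightarrow> real) \<Rightarrow> (nat \<Rightarrow> real) \<Rightarrow> real \<Rightarrow> nat" where
  "coord_owner n l r v = (THE i. i \<in> {1..n} \<and> (l i = v \<or> r i = v))"

lemma coord_seq_conv_map:
  "coord_seq n l r = map (coord_owner n l r) (sorted_list_of_set (coord_vals n l r))"
  unfolding coord_seq_def coord_owner_def ..

lemma coord_owner_eqI:
  assumes "distinct_coords n l r" "i \<in> {1..n}" "v = l i \<or> v = r i"
  shows "coord_owner n l r v = i"
  unfolding coord_owner_def
proof (rule the_equality)
  show "i \<in> {1..n} \<and> (l i = v \<or> r i = v)" using assms(2,3) by auto
next
  fix k assume k: "k \<in> {1..n} \<and> (l k = v \<or> r k = v)"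
  have "inj_on l {1..n}" "inj_on r {1..n}" "l k \<noteq> r i" "l i \<noteq> r k"
    using assms(1,2) k unfolding distinct_coords_def by auto
  then show "k = i"
    using k assms(2,3) inj_on_eq_iff[of l "{1..n}" k i] inj_on_eq_iff[of r "{1..n}" k i] by auto
qed

lemma seq_occ_coord_seq:
  assumes dc: "distinct_coords n l r" and i: "i \<in> {1..n}"
  defines "V \<equiv> coord_vals n l r"
  shows "seq_occ (coord_seq n l r) i = {set_rank V (l i), set_rank V (r i)}"
proof (intro set_eqI iffI)
  let ?L = "sorted_list_of_set V"
  have len: "length (coord_seq n l r) = 2 * n" "length ?L = 2 * n"
    using card_coord_vals[OF dc] by (simp_all add: coord_seq_conv_map V_def)
  fix j
  assume "j \<in> seq_occ (coord_seq n l r) i"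
  then have j: "1 \<le> j" "j \<le> 2 * n" and owner: "coord_owner n l r (?L ! (j - 1)) = i"
    unfolding seq_occ_def using len(1) by (auto simp: coord_seq_conv_map V_def)
  have "j - 1 < length ?L" using j len(2) by simp
  then have "?L ! (j - 1) \<in> V" using nth_mem[of "j - 1" ?L] by (simp add: V_def)
  then obtain k where k: "k \<in> {1..n}" "?L ! (j - 1) = l k \<or> ?L ! (j - 1) = r k"
    unfolding V_def coord_vals_def by auto
  then have "k = i" using owner coord_owner_eqI[OF dc k(1)] by auto
  moreover have "set_rank V (?L ! (j - 1)) = j"
    using set_rank_sorted_list_of_set[of V "j - 1"] j card_coord_vals[OF dc] by (simp add: V_def)
  ultimately show "j \<in> {set_rank V (l i), set_rank V (r i)}" using k(2) by auto
next
  let ?L = "sorted_list_of_set V"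
  fix j
  assume "j \<in> {set_rank V (l i), set_rank V (r i)}"
  then obtain v where v: "v = l i \<or> v = r i" "j = set_rank V v" by blast
  then have "v \<in> V" using i unfolding V_def coord_vals_def by auto
  then have "j \<in> {1..2 * n}" "?L ! (j - 1) = v"
    using nth_sorted_list_of_set_rank[of V v] card_coord_vals[OF dc] v(2) by (simp_all add: V_def)
  moreover have "j - 1 < length ?L" using \<open>j \<in> {1..2 * n}\<close> card_coord_vals[OF dc] by (auto simp: V_def)
  ultimately show "j \<in> seq_occ (coord_seq n l r) i"
    using coord_owner_eqI[OF dc i v(1)]
    unfolding seq_occ_def by (simp add: coord_seq_conv_map V_def)
qed

lemma seq_fst_snd_coord_seq:
  assumes "distinct_coords n l r" "i \<in> {1..n}" "l i < r i"
  defines "V \<equiv> coord_vals n l r"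
  shows "seq_fst (coord_seq n l r) i = set_rank V (l i)"
    and "seq_snd (coord_seq n l r) i = set_rank V (r i)"
proof -
  have "l i \<in> V" "r i \<in> V" using assms(2) unfolding V_def coord_vals_def by auto
  then have "set_rank V (l i) < set_rank V (r i)"
    using set_rank_less_iff[of V "l i" "r i"] assms(3) by (simp add: V_def)
  then show "seq_fst (coord_seq n l r) i = set_rank V (l i)"
    and "seq_snd (coord_seq n l r) i = set_rank V (r i)"
    using seq_occ_coord_seq[OF assms(1,2)] unfolding seq_fst_def seq_snd_def V_def
    by simp_all
qed

lemma sorted_list_of_set_strict_mono_on_image:
  assumes "finite A" "strict_mono_on A f"
  shows "sorted_list_of_set (f ` A) = map f (sorted_list_of_set A)"
proof -
  let ?L = "sorted_list_of_set A"
  have "sorted_wrt (\<lambda>x y. f x < f y) ?L"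
    by (rule sorted_wrt_mono_rel[OF _ strict_sorted_list_of_set])
       (use assms in \<open>auto dest: strict_mono_onD\<close>)
  moreover have "card (f ` A) = card A"
    using card_image[OF strict_mono_on_imp_inj_on[OF assms(2)]] .
  ultimately show ?thesis
    using assms(1) by (subst sorted_list_of_set_unique[symmetric]) (auto simp: sorted_wrt_map)
qed

lemma coord_vals_image:
  assumes "\<forall>i\<in>{1..n}. l' i = \<phi> (l i) \<and> r' i = \<phi> (r i)"
  shows "coord_vals n l' r' = \<phi> ` coord_vals n l r"
  using assms unfolding coord_vals_def by (auto simp: image_Un image_image)

lemma coord_seq_strict_mono_on_image:
  assumes mono: "strict_mono_on (coord_vals n l r) \<phi>"
    and img: "\<forall>i\<in>{1..n}. l' i = \<phi> (l i) \<and> r' i = \<phi> (r i)"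
  shows "coord_seq n l' r' = coord_seq n l r"
proof -
  have inj: "inj_on \<phi> (coord_vals n l r)"
    using strict_mono_on_imp_inj_on[OF mono] .
  have owner: "coord_owner n l' r' (\<phi> v) = coord_owner n l r v" if "v \<in> coord_vals n l r" for v
  proof -
    have iff: "l' i = \<phi> v \<longleftrightarrow> l i = v" "r' i = \<phi> v \<longleftrightarrow> r i = v" if "i \<in> {1..n}" for i
      using img inj_on_eq_iff[OF inj] \<open>v \<in> coord_vals n l r\<close> that
      unfolding coord_vals_def by auto
    have "i \<in> {1..n} \<and> (l' i = \<phi> v \<or> r' i = \<phi> v) \<longleftrightarrow> i \<in> {1..n} \<and> (l i = v \<or> r i = v)" for i
      using iff[of i] by blast
    then show ?thesis unfolding coord_owner_def by presburger
  qed
  have "coord_seq n l' r' = map (coord_owner n l' r' \<circ> \<phi>) (sorted_list_of_set (coord_vals n l r))"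
    unfolding coord_seq_conv_map coord_vals_image[where \<phi> = \<phi> and l = l and r = r, OF img]
    by (simp add: sorted_list_of_set_strict_mono_on_image[OF finite_coord_vals mono])
  also have "\<dots> = coord_seq n l r"
    unfolding coord_seq_conv_map using owner by (auto intro: map_cong)
  finally show ?thesis .
qed

lemma distinct_coords_inj_on_image:
  assumes "distinct_coords n l r" "inj_on \<phi> (coord_vals n l r)"
    and "\<forall>i\<in>{1..n}. l' i = \<phi> (l i) \<and> r' i = \<phi> (r i)"
  shows "distinct_coords n l' r'"
proof -
  have vals: "l i \<in> coord_vals n l r" "r i \<in> coord_vals n l r" if "i \<in> {1..n}" for i
    using that unfolding coord_vals_def by auto
  have iff: "l' i = l' k \<longleftrightarrow> l i = l k" "r' i = r' k \<longleftrightarrow> r i = r k" "l' i = r' k \<longleftrightarrow> l i = r k"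
    if "i \<in> {1..n}" "k \<in> {1..n}" for i k
    using assms(3) inj_on_eq_iff[OF assms(2)] vals that by auto
  have "inj_on l {1..n}" "inj_on r {1..n}" "\<forall>i\<in>{1..n}. \<forall>k\<in>{1..n}. l i \<noteq> r k"
    using assms(1) unfolding distinct_coords_def by auto
  then show ?thesis
    unfolding distinct_coords_def inj_on_def using iff by metis
qed

lemma seq_fst_less_seq_snd_coord_seq:
  assumes "distinct_coords n l r" "i \<in> {1..n}" "l i < r i"
  shows "1 \<le> seq_fst (coord_seq n l r) i" "seq_fst (coord_seq n l r) i < seq_snd (coord_seq n l r) i"
proof -
  have "l i \<in> coord_vals n l r" "r i \<in> coord_vals n l r"
    using assms(2) unfolding coord_vals_def by auto
  then show "1 \<le> seq_fst (coord_seq n l r) i" "seq_fst (coord_seq n l r) i < seq_snd (coord_seq n l r) i"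
    using seq_fst_snd_coord_seq[OF assms] set_rank_less_iff[of "coord_vals n l r" "l i" "r i"] assms(3)
    by (simp_all add: set_rank_def)
qed

lemma coord_seq_realization:
  fixes P :: "nat \<Rightarrow> real"
  assumes dc: "distinct_coords n l r" and lr: "\<forall>i\<in>{1..n}. l i < r i"
    and P: "strict_mono_on {1..2 * n} P"
  defines "s \<equiv> coord_seq n l r"
  defines "l' \<equiv> \<lambda>i. P (seq_fst s i)" and "r' \<equiv> \<lambda>i. P (seq_snd s i)"
  shows "\<forall>i\<in>{1..n}. l' i < r' i" and "distinct_coords n l' r'" and "coord_seq n l' r' = s"
proof -
  define V where "V = coord_vals n l r"
  define \<phi> where "\<phi> v = P (set_rank V v)" for v
  have mono: "strict_mono_on V \<phi>"
  proof (rule strict_mono_onI)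
    fix v w assume "v \<in> V" "w \<in> V" "v < w"
    moreover have "set_rank V u \<in> {1..2 * n}" if "u \<in> V" for u
      using nth_sorted_list_of_set_rank(1)[of V u] card_coord_vals[OF dc] that by (simp add: V_def)
    ultimately show "\<phi> v < \<phi> w"
      unfolding \<phi>_def using set_rank_less_iff[of V v w] strict_mono_onD[OF P] by (simp add: V_def)
  qed
  have vals: "l i \<in> V" "r i \<in> V" if "i \<in> {1..n}" for i
    using that unfolding V_def coord_vals_def by auto
  have img: "\<forall>i\<in>{1..n}. l' i = \<phi> (l i) \<and> r' i = \<phi> (r i)"
    using seq_fst_snd_coord_seq[OF dc] lr unfolding l'_def r'_def \<phi>_def s_def V_def by simp
  show "\<forall>i\<in>{1..n}. l' i < r' i"
    using img lr vals strict_mono_onD[OF mono] by simp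
  show "distinct_coords n l' r'"
    using distinct_coords_inj_on_image[OF dc _ img] strict_mono_on_imp_inj_on[OF mono]
    by (simp add: V_def)
  show "coord_seq n l' r' = s"
    using coord_seq_strict_mono_on_image[where \<phi> = \<phi> and l = l and r = r, OF _ img] mono
    by (simp add: V_def s_def)
qed

lemma sum_atLeastLessThan_diff:
  fixes x :: "nat \<Rightarrow> 'a::ab_group_add"
  assumes "m \<le> a" "a \<le> b"
  shows "(\<Sum>k\<in>{m..<b}. x k) - (\<Sum>k\<in>{m..<a}. x k) = (\<Sum>k\<in>{a..<b}. x k)"
  using sum.atLeastLessThan_concat[OF assms, of x] by (simp add: algebra_simps)

lemma strict_mono_on_prefix_sums:
  fixes x :: "nat \<Rightarrow> real"
  assumes "\<forall>k\<in>{1..<m}. 0 < x k"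
  shows "strict_mono_on {1..m} (\<lambda>a. \<Sum>k\<in>{1..<a}. x k)"
proof (rule strict_mono_onI)
  fix a b assume ab: "a \<in> {1..m}" "b \<in> {1..m}" "a < b"
  have "0 < (\<Sum>k\<in>{a..<b}. x k)"
    using assms ab by (intro sum_pos) auto
  then show "(\<Sum>k\<in>{1..<a}. x k) < (\<Sum>k\<in>{1..<b}. x k)"
    using sum_atLeastLessThan_diff[of 1 a b x] ab by simp
qed

lemma ex_scale_ge_one:
  fixes g :: "'a \<Rightarrow> real"
  assumes "finite K" "\<forall>k\<in>K. 0 < g k"
  shows "\<exists>c>0. \<forall>k\<in>K. 1 \<le> c * g k"
proof (intro exI conjI ballI)
  let ?c = "1 + (\<Sum>k\<in>K. 1 / g k)"
  have nonneg: "\<forall>k\<in>K. 0 \<le> 1 / g k" using assms(2) by (auto intro: less_imp_le)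
  then show "0 < ?c" by (simp add: add_pos_nonneg sum_nonneg)
  fix k assume k: "k \<in> K"
  have "1 / g k \<le> ?c"
    using member_le_sum[of k K "\<lambda>k. 1 / g k"] nonneg k assms(1) by simp
  then show "1 \<le> ?c * g k"
    using assms(2) k by (simp add: field_simps)
qed

lemma squares_of_lp_solution:
  assumes rect: "rect_family n l r b t"
    and dcx: "distinct_coords n l r" and dcy: "distinct_coords n b t"
    and sol: "lp_feasible_sol n (coord_seq n l r) (coord_seq n b t) x y"
  defines "as \<equiv> coord_seq n l r" and "bs \<equiv> coord_seq n b t"
  defines "l' \<equiv> \<lambda>i. \<Sum>k\<in>{1..<seq_fst as i}. x k" and "r' \<equiv> \<lambda>i. \<Sum>k\<in>{1..<seq_snd as i}. x k"
    and "b' \<equiv> \<lambda>i. \<Sum>k\<in>{1..<seq_fst bs i}. y k" and "t' \<equiv> \<lambda>i. \<Sum>k\<in>{1..<seq_snd bs i}. y k"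
  shows "square_family n l' r' b' t' \<and> distinct_coords n l' r' \<and> distinct_coords n b' t' \<and>
    coord_seq n l' r' = as \<and> coord_seq n b' t' = bs"
proof -
  have lr: "\<forall>i\<in>{1..n}. l i < r i" and bt: "\<forall>i\<in>{1..n}. b i < t i"
    using rect unfolding rect_family_def by auto
  have "1 \<le> x k \<and> 1 \<le> y k" if "k \<in> {1..<2 * n}" for k
    using sol that unfolding lp_feasible_sol_def by auto
  then have "\<forall>k\<in>{1..<2 * n}. 0 < x k" "\<forall>k\<in>{1..<2 * n}. 0 < y k"
    by force+
  note X = coord_seq_realization[OF dcx lr strict_mono_on_prefix_sums[OF this(1)], folded as_def]
   and Y = coord_seq_realization[OF dcy bt strict_mono_on_prefix_sums[OF this(2)], folded bs_def]
  have "r' i - l' i = t' i - b' i" if i: "i \<in> {1..n}" for i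
  proof -
    have "r' i - l' i = (\<Sum>k\<in>{seq_fst as i..<seq_snd as i}. x k)"
      unfolding l'_def r'_def as_def using seq_fst_less_seq_snd_coord_seq[OF dcx i] lr i
      by (simp add: sum_atLeastLessThan_diff)
    also have "\<dots> = (\<Sum>k\<in>{seq_fst bs i..<seq_snd bs i}. y k)"
      using sol i unfolding lp_feasible_sol_def as_def bs_def by blast
    also have "\<dots> = t' i - b' i"
      unfolding b'_def t'_def bs_def using seq_fst_less_seq_snd_coord_seq[OF dcy i] bt i
      by (simp add: sum_atLeastLessThan_diff)
    finally show ?thesis .
  qed
  then show ?thesis
    using X Y unfolding square_family_def rect_family_def l'_def r'_def b'_def t'_def by simp
qed

lemma lp_solution_of_squares:
  assumes sq: "square_family n l r b t"
    and dcx: "distinct_coords n l r" and dcy: "distinct_coords n b t"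
  shows "\<exists>x y. lp_feasible_sol n (coord_seq n l r) (coord_seq n b t) x y"
proof -
  have lr: "\<forall>i\<in>{1..n}. l i < r i" and bt: "\<forall>i\<in>{1..n}. b i < t i"
    and side: "\<forall>i\<in>{1..n}. r i - l i = t i - b i"
    using sq unfolding square_family_def rect_family_def by auto
  define u where "u k = sorted_list_of_set (coord_vals n l r) ! (k - 1)" for k
  define w where "w k = sorted_list_of_set (coord_vals n b t) ! (k - 1)" for k
  have gap: "0 < u (Suc k) - u k \<and> 0 < w (Suc k) - w k" if "k \<in> {1..<2 * n}" for k
    using that card_coord_vals[OF dcx] card_coord_vals[OF dcy]
      sorted_wrt_nth_less[OF strict_sorted_list_of_set[of "coord_vals n l r"], of "k - 1" k]
      sorted_wrt_nth_less[OF strict_sorted_list_of_set[of "coord_vals n b t"], of "k - 1" k]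
    unfolding u_def w_def by auto
  obtain c where c: "\<forall>k\<in>{1..<2 * n}. 1 \<le> c * min (u (Suc k) - u k) (w (Suc k) - w k)" "0 < c"
    using ex_scale_ge_one[of "{1..<2 * n}" "\<lambda>k. min (u (Suc k) - u k) (w (Suc k) - w k)"] gap
    by auto
  define x where "x k = c * (u (Suc k) - u k)" for k
  define y where "y k = c * (w (Suc k) - w k)" for k
  have telescope: "(\<Sum>k\<in>{seq_fst (coord_seq n l r) i..<seq_snd (coord_seq n l r) i}. x k) = c * (r i - l i)"
    "(\<Sum>k\<in>{seq_fst (coord_seq n b t) i..<seq_snd (coord_seq n b t) i}. y k) = c * (t i - b i)"
    if i: "i \<in> {1..n}" for i
  proof -
    have "u (set_rank (coord_vals n l r) v) = v" if "v \<in> coord_vals n l r" for v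
      unfolding u_def using nth_sorted_list_of_set_rank(2)[OF finite_coord_vals that] .
    moreover have "w (set_rank (coord_vals n b t) v) = v" if "v \<in> coord_vals n b t" for v
      unfolding w_def using nth_sorted_list_of_set_rank(2)[OF finite_coord_vals that] .
    moreover have "l i \<in> coord_vals n l r" "r i \<in> coord_vals n l r" "b i \<in> coord_vals n b t" "t i \<in> coord_vals n b t"
      using i unfolding coord_vals_def by auto
    ultimately have "u (seq_fst (coord_seq n l r) i) = l i" "u (seq_snd (coord_seq n l r) i) = r i"
      "w (seq_fst (coord_seq n b t) i) = b i" "w (seq_snd (coord_seq n b t) i) = t i"
      using seq_fst_snd_coord_seq[OF dcx i lr[rule_format, OF i]]
        seq_fst_snd_coord_seq[OF dcy i bt[rule_format, OF i]] by simp_all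
    then show "(\<Sum>k\<in>{seq_fst (coord_seq n l r) i..<seq_snd (coord_seq n l r) i}. x k) = c * (r i - l i)"
      "(\<Sum>k\<in>{seq_fst (coord_seq n b t) i..<seq_snd (coord_seq n b t) i}. y k) = c * (t i - b i)"
      using seq_fst_less_seq_snd_coord_seq[OF dcx i] seq_fst_less_seq_snd_coord_seq[OF dcy i] lr bt i
      unfolding x_def y_def by (simp_all add: sum_distrib_left[symmetric] sum_Suc_diff')
  qed
  have "lp_feasible_sol n (coord_seq n l r) (coord_seq n b t) x y"
    unfolding lp_feasible_sol_def
  proof (intro conjI ballI)
    fix k assume "k \<in> {1..2 * n - 1}"
    then have "k \<in> {1..<2 * n}" by auto
    then show "1 \<le> x k" "1 \<le> y k"
      using c unfolding x_def y_def by (smt (verit) mult_left_mono)+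
  next
    fix i assume "i \<in> {1..n}"
    then show "(\<Sum>k\<in>{seq_fst (coord_seq n l r) i..<seq_snd (coord_seq n l r) i}. x k)
      = (\<Sum>k\<in>{seq_fst (coord_seq n b t) i..<seq_snd (coord_seq n b t) i}. y k)"
      using telescope side by simp
  qed
  then show ?thesis by blast
qed

theorem mainTheorem3:
  fixes n :: nat and l r b t :: "nat \<Rightarrow> real"
  assumes "rect_family n l r b t"
    and "distinct_coords n l r" and "distinct_coords n b t"
  shows "((\<exists>l' r' b' t' :: nat \<Rightarrow> real.
             square_family n l' r' b' t' \<and> distinct_coords n l' r' \<and> distinct_coords n b' t' \<and>
             coord_seq n l' r' = coord_seq n l r \<and> coord_seq n b' t' = coord_seq n b t)
          \<longleftrightarrow> (\<exists>x y. lp_feasible_sol n (coord_seq n l r) (coord_seq n b t) x y))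
       \<and> (\<forall>x y. lp_feasible_sol n (coord_seq n l r) (coord_seq n b t) x y \<longrightarrow>
            (let as = coord_seq n l r; bs = coord_seq n b t;
                 l' = (\<lambda>i. \<Sum>k\<in>{1..<seq_fst as i}. x k);
                 r' = (\<lambda>i. \<Sum>k\<in>{1..<seq_snd as i}. x k);
                 b' = (\<lambda>i. \<Sum>k\<in>{1..<seq_fst bs i}. y k);
                 t' = (\<lambda>i. \<Sum>k\<in>{1..<seq_snd bs i}. y k)
             in square_family n l' r' b' t' \<and> distinct_coords n l' r' \<and> distinct_coords n b' t' \<and>
                coord_seq n l' r' = as \<and> coord_seq n b' t' = bs))"
  unfolding Let_def
proof (intro conjI iffI allI impI)
  assume "\<exists>l' r' b' t'. square_family n l' r' b' t' \<and> distinct_coords n l' r' \<and> distinct_coords n b' t' \<and>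
    coord_seq n l' r' = coord_seq n l r \<and> coord_seq n b' t' = coord_seq n b t"
  then show "\<exists>x y. lp_feasible_sol n (coord_seq n l r) (coord_seq n b t) x y"
    using lp_solution_of_squares by metis
qed (use squares_of_lp_solution[OF assms] in blast)+

end
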